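(* Let $F:\mathrm{Dens}(\mathcal X)\to\mathbb R$ be convex and let $\{d_\rho\in\overline\partial F(\rho)\}_{\rho\in\mathrm{Dens}(\mathcal X)}$ be a selection of extended subgradients. Then there exists a truthful quantum score $S$ such that $S(\rho';\rho)=F(\rho')+\langle d_{\rho'},\rho-\rho'\rangle$ for all $\rho,\rho'\in\mathrm{Dens}(\mathcal X)$.
   Context: Let $\mathcal X=\mathbb C^n$, $\mathrm{Herm}(\mathcal X)$ the Hermitian matrices with $\langle X,Y\rangle=\mathrm{Tr}(X^*Y)$, $\mathrm{Pos}(\mathcal X)$ the positive semidefinite ones, $\mathrm{Dens}(\mathcal X)$ the trace-one elements of $\mathrm{Pos}(\mathcal X)$. A measurement with finite outcome set $\mathcal Y\subseteq\mathbb N$ is $\mu=\{\mu_y\}_{y\in\mathcal Y}\subseteq\mathrm{Pos}(\mathcal X)$ with $\sum_y\mu_y=I$. A quantum score is $S=(s,\mu)$ with $s:\mathrm{Dens}(\mathcal X)\times\mathbb N\to\mathbb R\cup\{\pm\infty\}$, $\mu:\mathrm{Dens}(\mathcal X)\to\mathrm{Meas}(\mathcal X)$, expected score $S(\rho';\rho)=\sum_y\langle\mu(\rho')_y,\rho\rangle s(\rho',y)$ ($0\cdot\pm\infty=0$); truthful if $S(\rho;\rho)\ge S(\rho';\rho)$ for all $\rho,\rho'$. Extended linear functions $\ell:\mathrm{Herm}(\mathcal X)\to\overline{\mathbb R}$: $\ell(\alpha v)=\alpha\ell(v)$ for real $\alpha$, $\ell(v+v')=\ell(v)+\ell(v')$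 whenever $\{\ell(v),\ell(v')\}\ne\{\infty,-\infty\}$. $\overline\partial F(\rho)$ is the set of extended linear $d$ with $F(\rho')\ge F(\rho)+\langle d,\rho'-\rho\rangle$ for all $\rho'\in\mathrm{Dens}(\mathcal X)$; a selection of extended subgradients is a family $\{d_\rho\in\overline\partial F(\rho)\}$ with $\langle d_\rho,\tau-\rho\rangle\in\mathbb R\cup\{-\infty\}$ for all $\rho,\tau\in\mathrm{Dens}(\mathcal X)$. *)

theory Defs
  imports "HOL-Analysis.Analysis" "HOL-Library.Extended_Real"
begin

text \<open>The space X = C^n is modelled by the finite index type 'n; operators on X are
  complex matrices of type complex^'n^'n.\<close>

type_synonym 'n cmat = "complex^'n^'n"

definition adj :: "'n::finite cmat \<Rightarrow> 'n cmat" where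
  "adj A = (\<chi> i j. cnj (A $ j $ i))"

definition hermitian :: "'n::finite cmat \<Rightarrow> bool" where
  "hermitian A \<longleftrightarrow> adj A = A"

text \<open>Hilbert-Schmidt inner product Tr(X^* Y); it is real on Hermitian matrices,
  so we take the real part.\<close>
definition hs_inner :: "'n::finite cmat \<Rightarrow> 'n cmat \<Rightarrow> real" where
  "hs_inner X Y = Re (trace (adj X ** Y))"

definition psd :: "'n::finite cmat \<Rightarrow> bool" where
  "psd A \<longleftrightarrow> hermitian A \<and>
     (\<forall>v::complex^'n. 0 \<le> Re (\<Sum>i\<in>UNIV. cnj (v $ i) * (A *v v) $ i))"

definition Dens :: "'n::finite cmat set" where
  "Dens = {A. psd A \<and> trace A = 1}"

type_synonym 'n meas = "nat set \<times> (nat \<Rightarrow> 'n cmat)"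

definition is_measurement :: "'n::finite meas \<Rightarrow> bool" where
  "is_measurement M \<longleftrightarrow> finite (fst M) \<and> (\<forall>y\<in>fst M. psd (snd M y))
      \<and> (\<Sum>y\<in>fst M. snd M y) = mat 1"

definition is_quantum_score :: "('n::finite cmat \<Rightarrow> nat \<Rightarrow> ereal) \<Rightarrow> ('n cmat \<Rightarrow> 'n meas) \<Rightarrow> bool" where
  "is_quantum_score s \<mu> \<longleftrightarrow> (\<forall>\<rho>\<in>Dens. is_measurement (\<mu> \<rho>))"

text \<open>Expected score S(rho'; rho); in ereal, 0 * (+-infinity) = 0.\<close>
definition expected_score ::
  "('n::finite cmat \<Rightarrow> nat \<Rightarrow> ereal) \<Rightarrow> ('n cmat \<Rightarrow> 'n meas) \<Rightarrow> 'n cmat \<Rightarrow> 'n cmat \<Rightarrow> ereal" where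
  "expected_score s \<mu> \<rho>' \<rho> =
     (\<Sum>y\<in>fst (\<mu> \<rho>'). ereal (hs_inner (snd (\<mu> \<rho>') y) \<rho>) * s \<rho>' y)"

definition truthful :: "('n::finite cmat \<Rightarrow> nat \<Rightarrow> ereal) \<Rightarrow> ('n cmat \<Rightarrow> 'n meas) \<Rightarrow> bool" where
  "truthful s \<mu> \<longleftrightarrow> (\<forall>\<rho>\<in>Dens. \<forall>\<rho>'\<in>Dens. expected_score s \<mu> \<rho>' \<rho> \<le> expected_score s \<mu> \<rho> \<rho>)"

text \<open>Extended linear functions Herm(X) \<rightarrow> [-\<infinity>,\<infinity>] (only values on Hermitian
  matrices matter).\<close>
definition ext_linear :: "('n::finite cmat \<Rightarrow> ereal) \<Rightarrow> bool" where
  "ext_linear l \<longleftrightarrow>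
     (\<forall>v. hermitian v \<longrightarrow> (\<forall>\<alpha>::real. l (\<alpha> *\<^sub>R v) = ereal \<alpha> * l v)) \<and>
     (\<forall>v v'. hermitian v \<longrightarrow> hermitian v' \<longrightarrow> {l v, l v'} \<noteq> {\<infinity>, -\<infinity>} \<longrightarrow>
        l (v + v') = l v + l v')"

definition ext_subdiff :: "('n::finite cmat \<Rightarrow> real) \<Rightarrow> 'n cmat \<Rightarrow> ('n cmat \<Rightarrow> ereal) set" where
  "ext_subdiff F \<rho> = {d. ext_linear d \<and>
      (\<forall>\<rho>'\<in>Dens. ereal (F \<rho>') \<ge> ereal (F \<rho>) + d (\<rho>' - \<rho>))}"

definition selection_ext_subgradients ::
  "('n::finite cmat \<Rightarrow> real) \<Rightarrow> ('n cmat \<Rightarrow> 'n cmat \<Rightarrow> ereal) \<Rightarrow> bool" where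
  "selection_ext_subgradients F d \<longleftrightarrow>
     (\<forall>\<rho>\<in>Dens. d \<rho> \<in> ext_subdiff F \<rho>) \<and>
     (\<forall>\<rho>\<in>Dens. \<forall>\<tau>\<in>Dens. d \<rho> (\<tau> - \<rho>) \<noteq> \<infinity>)"

end

theory Submission
  imports Defs
begin

text \<open>The claimed score is \<rho> \<mapsto> F(\<rho>') + d(\<rho>')(\<rho> - \<rho>'), and truthfulness is exactly the
  subgradient inequality; the content is that any extended affine function
  \<rho> \<mapsto> c + D(\<rho> - r) on density matrices (D extended linear, never +\<infinity> there) is the
  expected score of a finite measurement. The density matrices where D(\<rho> - r) > -\<infinity> form
  a face of Dens, hence are those \<rho> whose null space contains that of a fixed S; they are
  detected by \<langle>P, \<rho>\<rangle> = 0 for a positive semidefinite P, and on them D is the real linear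
  functional \<langle>H, -\<rangle> for a Hermitian H. A three-outcome measurement built from P, H and
  the identity, with score -\<infinity> on the P-outcome, then realises the function.\<close>

section \<open>Hermitian matrices and the Hilbert-Schmidt inner product\<close>

lemma inner_complex_eq_Re_cnj: "inner (a::complex) b = Re (cnj a * b)"
  by (simp add: inner_complex_def)

lemma hs_inner_eq_inner: "hs_inner X Y = inner X Y"
proof -
  have "hs_inner X Y = (\<Sum>i\<in>UNIV. \<Sum>k\<in>UNIV. Re (cnj (X$k$i) * Y$k$i))"
    by (simp add: hs_inner_def trace_def matrix_matrix_mult_def adj_def Re_sum)
  also have "\<dots> = (\<Sum>k\<in>UNIV. \<Sum>i\<in>UNIV. Re (cnj (X$k$i) * Y$k$i))"
    by (rule sum.swap)
  finally show ?thesis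
    by (simp add: inner_vec_def inner_complex_eq_Re_cnj)
qed

lemma hermitian_iff_nth: "hermitian A \<longleftrightarrow> (\<forall>i j. A $ i $ j = cnj (A $ j $ i))"
proof -
  have "hermitian A \<longleftrightarrow> (\<forall>i j. adj A $ i $ j = A $ i $ j)"
    by (simp add: hermitian_def vec_eq_iff)
  also have "\<dots> \<longleftrightarrow> (\<forall>i j. A $ i $ j = cnj (A $ j $ i))"
    unfolding adj_def vec_lambda_beta by (metis (no_types))
  finally show ?thesis .
qed

lemma adj_add: "adj (A + B) = adj A + adj B"
  by (simp add: adj_def vec_eq_iff)

lemma adj_diff: "adj (A - B) = adj A - adj B"
  by (simp add: adj_def vec_eq_iff)

lemma adj_scaleR: "adj (c *\<^sub>R A) = c *\<^sub>R adj A"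
  by (simp add: adj_def vec_eq_iff)

lemma adj_mat_one: "adj (mat 1 :: 'n::finite cmat) = mat 1"
  by (simp add: adj_def vec_eq_iff mat_def)

lemma adj_adj: "adj (adj A) = A"
  by (simp add: adj_def vec_eq_iff)

lemma hermitian_add: "hermitian A \<Longrightarrow> hermitian B \<Longrightarrow> hermitian (A + B)"
  by (simp add: hermitian_def adj_add)

lemma hermitian_diff: "hermitian A \<Longrightarrow> hermitian B \<Longrightarrow> hermitian (A - B)"
  by (simp add: hermitian_def adj_diff)

lemma hermitian_scaleR: "hermitian A \<Longrightarrow> hermitian (c *\<^sub>R A)"
  by (simp add: hermitian_def adj_scaleR)

lemma hermitian_zero: "hermitian 0"
  by (simp add: hermitian_def adj_def vec_eq_iff)

lemma hermitian_mat_one: "hermitian (mat 1 :: 'n::finite cmat)"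
  by (simp add: hermitian_def adj_mat_one)

lemma hs_inner_adj_hermitian:
  assumes "hermitian Y"
  shows "hs_inner (adj X) Y = hs_inner X Y"
proof -
  have "Re (cnj (adj X $ i $ j) * Y $ i $ j) = Re (cnj (X $ j $ i) * Y $ j $ i)" for i j
  proof -
    have "Y $ i $ j = cnj (Y $ j $ i)"
      using assms unfolding hermitian_iff_nth by blast
    then have "cnj (adj X $ i $ j) * Y $ i $ j = cnj (cnj (X $ j $ i) * Y $ j $ i)"
      by (simp add: adj_def)
    then show ?thesis
      by (metis cnj.sel(1))
  qed
  then have "hs_inner (adj X) Y = (\<Sum>i\<in>UNIV. \<Sum>j\<in>UNIV. Re (cnj (X $ j $ i) * Y $ j $ i))"
    by (simp add: hs_inner_eq_inner inner_vec_def inner_complex_eq_Re_cnj)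
  also have "\<dots> = (\<Sum>j\<in>UNIV. \<Sum>i\<in>UNIV. Re (cnj (X $ j $ i) * Y $ j $ i))"
    by (rule sum.swap)
  finally show ?thesis
    by (simp add: hs_inner_eq_inner inner_vec_def inner_complex_eq_Re_cnj)
qed

lemma scaleR_matrix_vector_mult: "(c *\<^sub>R A) *v x = c *\<^sub>R (A *v (x :: complex^'n::finite))"
  by (simp add: matrix_vector_mult_def vec_eq_iff scaleR_sum_right)

lemma hermitian_inner_matrix_vector_commute:
  assumes "hermitian A"
  shows "inner x (A *v y) = inner y (A *v x)"
proof -
  have "inner x (A *v y) = (\<Sum>i\<in>UNIV. \<Sum>j\<in>UNIV. Re (cnj (x$i) * A$i$j * y$j))"
    by (simp add: inner_vec_def matrix_vector_mult_def inner_complex_eq_Re_cnj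
        sum_distrib_left Re_sum mult.assoc)
  also have "\<dots> = (\<Sum>j\<in>UNIV. \<Sum>i\<in>UNIV. Re (cnj (x$i) * A$i$j * y$j))"
    by (rule sum.swap)
  also have "\<dots> = inner y (A *v x)"
  proof -
    have conj: "A$j$i = cnj (A$i$j)" for i j
      using assms unfolding hermitian_iff_nth by blast
    have "Re (cnj (x$i) * A$i$j * y$j) = Re (cnj (y$j) * A$j$i * x$i)" for i j
    proof -
      have "cnj (y$j) * A$j$i * x$i = cnj (cnj (x$i) * A$i$j * y$j)"
        by (simp add: conj[of i j] mult_ac)
      then show ?thesis
        by (metis cnj.sel(1))
    qed
    then show ?thesis
      by (simp add: inner_vec_def matrix_vector_mult_def inner_complex_eq_Re_cnj
          sum_distrib_left Re_sum mult.assoc)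
  qed
  finally show ?thesis .
qed

section \<open>Quadratic forms and positive semidefinite matrices\<close>

definition qform :: "'n::finite cmat \<Rightarrow> complex^'n \<Rightarrow> real" where
  "qform A x = inner x (A *v x)"

definition null_space :: "'n::finite cmat \<Rightarrow> (complex^'n) set" where
  "null_space A = {x. A *v x = 0}"

lemma psd_iff_qform: "psd A \<longleftrightarrow> hermitian A \<and> (\<forall>x. 0 \<le> qform A x)"
  by (simp add: psd_def qform_def inner_vec_def inner_complex_eq_Re_cnj Re_sum)

lemma subspace_null_space: "subspace (null_space A)"
  by (simp add: subspace_def null_space_def matrix_vector_right_distrib
      linear_scale[OF matrix_vector_mul_linear])

lemma qform_add: "qform (A + B) x = qform A x + qform B x"
  by (simp add: qform_def matrix_vector_mult_add_rdistrib inner_add_right)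

lemma qform_diff: "qform (A - B) x = qform A x - qform B x"
  by (simp add: qform_def matrix_vector_mult_diff_rdistrib inner_diff_right)

lemma qform_scaleR: "qform (c *\<^sub>R A) x = c * qform A x"
  by (simp add: qform_def scaleR_matrix_vector_mult)

lemma qform_scaleR_vector: "qform A (c *\<^sub>R x) = c\<^sup>2 * qform A x"
  by (simp add: qform_def linear_scale[OF matrix_vector_mul_linear] power2_eq_square)

lemma qform_mat_one: "qform (mat 1) x = (norm x)\<^sup>2"
  by (simp add: qform_def power2_norm_eq_inner)

lemma qform_bounded: "\<exists>K>0. \<forall>x. \<bar>qform A x\<bar> \<le> K * (norm x)\<^sup>2"
proof -
  obtain K where "K > 0" and K: "\<And>x. norm (A *v x) \<le> norm x * K"
    using bounded_linear.pos_bounded[OF matrix_vector_mul_bounded_linear] by blast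
  have "\<bar>qform A x\<bar> \<le> K * (norm x)\<^sup>2" for x
  proof -
    have "\<bar>qform A x\<bar> \<le> norm x * norm (A *v x)"
      unfolding qform_def by (rule Cauchy_Schwarz_ineq2)
    also have "\<dots> \<le> norm x * (norm x * K)"
      by (simp add: K mult_left_mono)
    finally show ?thesis
      by (simp add: power2_eq_square mult_ac)
  qed
  with \<open>K > 0\<close> show ?thesis
    by blast
qed

lemma continuous_on_qform: "continuous_on S (qform A)"
  unfolding qform_def[abs_def]
  by (intro continuous_intros linear_continuous_on matrix_vector_mul_bounded_linear)

lemma qform_add_null_space:
  assumes "hermitian A" "y \<in> null_space A"
  shows "qform A (y + z) = qform A z"
  using assms hermitian_inner_matrix_vector_commute[OF assms(1), of y z]
  by (simp add: qform_def null_space_def matrix_vector_right_distrib inner_add_left)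

lemma quadratic_nonneg_imp_linear_coeff_zero:
  fixes a M :: real
  assumes "\<And>t. 0 \<le> M * t\<^sup>2 - 2 * a * t"
  shows "a = 0"
proof (rule ccontr)
  assume "a \<noteq> 0"
  define t where "t = a / (\<bar>M\<bar> + 1)"
  have t_a: "(\<bar>M\<bar> + 1) * t = a"
    by (simp add: t_def)
  have "0 < a * t"
    using \<open>a \<noteq> 0\<close> by (simp add: t_def zero_less_divide_iff flip: power2_eq_square)
  moreover have "M * t\<^sup>2 \<le> a * t"
  proof -
    have "M * t\<^sup>2 \<le> (\<bar>M\<bar> + 1) * t\<^sup>2"
      by (intro mult_right_mono) auto
    also have "\<dots> = a * t"
      by (simp add: t_a[symmetric] power2_eq_square)
    finally show ?thesis .
  qed
  ultimately show False
    using assms[of t] by linarith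
qed

lemma psd_zero: "psd 0"
  by (simp add: psd_iff_qform hermitian_zero qform_def)

lemma psd_add: "psd A \<Longrightarrow> psd B \<Longrightarrow> psd (A + B)"
  by (simp add: psd_iff_qform hermitian_add qform_add)

lemma psd_scaleR: "psd A \<Longrightarrow> 0 \<le> c \<Longrightarrow> psd (c *\<^sub>R A)"
  by (simp add: psd_iff_qform hermitian_scaleR qform_scaleR)

lemma psd_sum: "(\<And>i. i \<in> I \<Longrightarrow> psd (A i)) \<Longrightarrow> psd (\<Sum>i\<in>I. A i)"
  by (induction I rule: infinite_finite_induct) (auto simp: psd_zero psd_add)

definition outer :: "complex^'n::finite \<Rightarrow> 'n cmat" where
  "outer b = (\<chi> i j. b $ i * cnj (b $ j))"

lemma hs_inner_outer: "hs_inner (outer b) T = qform T b"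
  by (simp add: hs_inner_eq_inner inner_vec_def inner_complex_eq_Re_cnj outer_def qform_def
      matrix_vector_mult_def sum_distrib_left Re_sum mult_ac)

lemma qform_outer: "qform (outer b) x = (cmod (\<Sum>j\<in>UNIV. cnj (b $ j) * x $ j))\<^sup>2"
proof -
  let ?s = "\<Sum>j\<in>UNIV. cnj (b $ j) * x $ j"
  have "outer b *v x = ?s *s b"
    by (simp add: outer_def matrix_vector_mult_def vec_eq_iff sum_distrib_left mult_ac)
  then have "qform (outer b) x = Re ((\<Sum>i\<in>UNIV. cnj (x $ i) * b $ i) * ?s)"
    by (simp add: qform_def inner_vec_def inner_complex_eq_Re_cnj Re_sum sum_distrib_right mult_ac)
  also have "(\<Sum>i\<in>UNIV. cnj (x $ i) * b $ i) = cnj ?s"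
    by (simp add: mult.commute)
  also have "cnj ?s * ?s = of_real ((cmod ?s)\<^sup>2)"
    by (simp only: mult.commute[of "cnj ?s"] complex_norm_square)
  finally show ?thesis
    by simp
qed

lemma psd_outer: "psd (outer b)"
proof -
  have "hermitian (outer b)"
    by (simp add: hermitian_iff_nth outer_def)
  then show ?thesis
    by (simp add: psd_iff_qform qform_outer)
qed

lemma psd_qform_eq_0_imp_null_space:
  assumes "psd A" "qform A x = 0"
  shows "x \<in> null_space A"
proof -
  define u where "u = A *v x"
  have herm: "hermitian A" and pos: "\<And>v. 0 \<le> qform A v"
    using assms(1) by (auto simp: psd_iff_qform)
  have "0 \<le> qform A u * t\<^sup>2 - 2 * inner u u * t" for t
  proof -
    have "qform A (x - t *\<^sub>R u)
        = qform A x - t * inner x (A *v u) - t * inner u (A *v x) + t\<^sup>2 * qform A u"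
      by (simp add: qform_def matrix_vector_mult_diff_distrib linear_scale[OF matrix_vector_mul_linear]
          inner_diff_left inner_diff_right power2_eq_square algebra_simps)
    also have "\<dots> = qform A u * t\<^sup>2 - 2 * inner u u * t"
      using assms(2) hermitian_inner_matrix_vector_commute[OF herm, of x u] by (simp add: u_def)
    finally show ?thesis
      using pos[of "x - t *\<^sub>R u"] by simp
  qed
  then have "inner u u = 0"
    by (rule quadratic_nonneg_imp_linear_coeff_zero)
  then show ?thesis
    by (simp add: u_def null_space_def)
qed

lemma psd_null_space_add:
  assumes "psd A" "psd B"
  shows "null_space (A + B) \<subseteq> null_space A"
proof
  fix x assume "x \<in> null_space (A + B)"
  then have "qform (A + B) x = 0"
    by (simp add: null_space_def qform_def)
  then have "qform A x + qform B x = 0"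
    by (simp add: qform_add)
  moreover have "0 \<le> qform A x" "0 \<le> qform B x"
    using assms by (auto simp: psd_iff_qform)
  ultimately show "x \<in> null_space A"
    by (intro psd_qform_eq_0_imp_null_space[OF assms(1)]) linarith
qed

lemma psd_coercive_orthogonal_null_space:
  assumes "psd S"
  obtains l where "l > 0" "\<And>z. (\<forall>w\<in>null_space S. inner w z = 0) \<Longrightarrow> l * (norm z)\<^sup>2 \<le> qform S z"
proof -
  define U where "U = sphere 0 1 \<inter> (\<Inter>w\<in>null_space S. {z. inner w z = 0})"
  have "compact U"
    unfolding U_def by (intro compact_Int_closed compact_sphere closed_INT ballI closed_hyperplane)
  obtain l where "l > 0" and l: "\<And>u. u \<in> U \<Longrightarrow> l \<le> qform S u"
  proof (cases "U = {}")
    case False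
    then obtain u0 where "u0 \<in> U" and min: "\<And>u. u \<in> U \<Longrightarrow> qform S u0 \<le> qform S u"
      using continuous_attains_inf[OF \<open>compact U\<close> _ continuous_on_qform] by blast
    have "u0 \<notin> null_space S"
      using \<open>u0 \<in> U\<close> by (auto simp: U_def)
    then have "qform S u0 \<noteq> 0"
      using psd_qform_eq_0_imp_null_space[OF assms] by blast
    moreover have "0 \<le> qform S u0"
      using assms by (simp add: psd_iff_qform)
    ultimately show ?thesis
      using that[of "qform S u0"] min by simp
  qed (use that[of 1] in simp)
  have "l * (norm z)\<^sup>2 \<le> qform S z" if "\<forall>w\<in>null_space S. inner w z = 0" for z
  proof (cases "z = 0")
    case False
    then have "(1 / norm z) *\<^sub>R z \<in> U"
      using that by (simp add: U_def)
    then have "l \<le> qform S ((1 / norm z) *\<^sub>R z)"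
      by (rule l)
    also have "\<dots> = qform S z / (norm z)\<^sup>2"
      by (simp add: qform_scaleR_vector power_one_over)
    finally have "l \<le> qform S z / (norm z)\<^sup>2" .
    with False show ?thesis
      by (simp add: field_simps)
  qed (simp add: qform_def)
  with \<open>l > 0\<close> that show ?thesis
    by blast
qed

lemma psd_dominated:
  assumes S: "psd S" and T: "psd T" and null: "null_space S \<subseteq> null_space T"
  obtains c where "c > 0" "\<And>x. qform T x \<le> c * qform S x"
proof -
  obtain l where "l > 0"
    and l: "\<And>z. (\<forall>w\<in>null_space S. inner w z = 0) \<Longrightarrow> l * (norm z)\<^sup>2 \<le> qform S z"
    using psd_coercive_orthogonal_null_space[OF S] by blast
  obtain K where "K > 0" and K: "\<And>x. \<bar>qform T x\<bar> \<le> K * (norm x)\<^sup>2"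
    using qform_bounded by blast
  have "qform T x \<le> (K / l) * qform S x" for x
  proof -
    obtain y z where y: "y \<in> span (null_space S)" and z: "\<And>w. w \<in> span (null_space S) \<Longrightarrow> orthogonal z w"
      and x: "x = y + z"
      using orthogonal_subspace_decomp_exists by metis
    have "y \<in> null_space S"
      using y by (simp add: span_eq_iff[THEN iffD2, OF subspace_null_space])
    then have qS: "qform S x = qform S z" and qT: "qform T x = qform T z"
      using x null S T qform_add_null_space by (auto simp: psd_iff_qform)
    have "\<forall>w\<in>null_space S. inner w z = 0"
      using z span_base by (metis orthogonal_def inner_commute)
    then have "K * (norm z)\<^sup>2 \<le> (K / l) * qform S z"
      using l[of z] \<open>l > 0\<close> \<open>K > 0\<close> by (simp add: field_simps mult_left_mono)
    then show ?thesis
      unfolding qS qT using abs_le_D1[OF K[of z]] by linarith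
  qed
  moreover have "K / l > 0"
    using \<open>l > 0\<close> \<open>K > 0\<close> by simp
  ultimately show ?thesis
    using that by blast
qed

lemma psd_detecting_null_space:
  obtains P where "psd P"
    and "\<And>T. psd T \<Longrightarrow> 0 \<le> hs_inner P T"
    and "\<And>T. psd T \<Longrightarrow> hs_inner P T = 0 \<longleftrightarrow> V \<subseteq> null_space T"
proof -
  obtain B where B: "B \<subseteq> V" "independent B" "V \<subseteq> span B"
    using basis_exists by metis
  have "finite B"
    using \<open>independent B\<close> by (rule finiteI_independent)
  define P where "P = (\<Sum>b\<in>B. outer b)"
  have P_T: "hs_inner P T = (\<Sum>b\<in>B. qform T b)" for T
    using hs_inner_outer[of _ T] by (simp add: P_def hs_inner_eq_inner inner_sum_left)
  have "0 \<le> hs_inner P T \<and> (hs_inner P T = 0 \<longleftrightarrow> V \<subseteq> null_space T)" if "psd T" for T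
  proof -
    have nonneg: "\<And>b. 0 \<le> qform T b"
      using \<open>psd T\<close> by (simp add: psd_iff_qform)
    have "hs_inner P T = 0 \<longleftrightarrow> (\<forall>b\<in>B. qform T b = 0)"
      unfolding P_T using \<open>finite B\<close> nonneg by (rule sum_nonneg_eq_0_iff)
    also have "\<dots> \<longleftrightarrow> B \<subseteq> null_space T"
      using psd_qform_eq_0_imp_null_space[OF \<open>psd T\<close>] by (auto simp: null_space_def qform_def)
    also have "\<dots> \<longleftrightarrow> V \<subseteq> null_space T"
      using B span_minimal[OF _ subspace_null_space] by blast
    finally show ?thesis
      using P_T nonneg by (simp add: sum_nonneg)
  qed
  moreover have "psd P"
    unfolding P_def by (rule psd_sum) (rule psd_outer)
  ultimately show ?thesis
    using that by blast
qed

section \<open>Density matrices\<close>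

lemma trace_scaleR: "trace (c *\<^sub>R A) = of_real c * trace (A :: 'n::finite cmat)"
proof -
  have "trace (c *\<^sub>R A) = c *\<^sub>R trace A"
    by (simp add: trace_def scaleR_sum_right)
  then show ?thesis
    by (simp add: scaleR_conv_of_real)
qed

lemma Dens_psd: "T \<in> Dens \<Longrightarrow> psd T"
  by (simp add: Dens_def)

lemma Dens_hermitian: "T \<in> Dens \<Longrightarrow> hermitian T"
  by (simp add: Dens_def psd_def)

lemma Dens_convex_comb:
  assumes "S \<in> Dens" "T \<in> Dens" "0 \<le> a" "a \<le> 1"
  shows "a *\<^sub>R S + (1 - a) *\<^sub>R T \<in> Dens"
  using assms by (auto simp: Dens_def psd_add psd_scaleR trace_add trace_scaleR simp flip: of_real_add)

lemma psd_null_space_convex_comb: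
  assumes "psd S" "psd T" "0 < a" "a < 1"
  shows "null_space (a *\<^sub>R S + (1 - a) *\<^sub>R T) \<subseteq> null_space S \<inter> null_space T"
proof -
  have "null_space (c *\<^sub>R A) = null_space A" if "c \<noteq> 0" for c and A :: "'a cmat"
    using that by (simp add: null_space_def scaleR_matrix_vector_mult)
  moreover have "psd (a *\<^sub>R S)" "psd ((1 - a) *\<^sub>R T)"
    using assms by (simp_all add: psd_scaleR)
  ultimately show ?thesis
    using psd_null_space_add[of "a *\<^sub>R S" "(1 - a) *\<^sub>R T"]
      psd_null_space_add[of "(1 - a) *\<^sub>R T" "a *\<^sub>R S"] assms(3,4)
    by (auto simp: add.commute)
qed

lemma Dens_decompose_dominated:
  assumes S: "S \<in> Dens" and T: "T \<in> Dens" and null: "null_space S \<subseteq> null_space T"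
  obtains a U where "0 < a" "a < 1" "U \<in> Dens" "S = a *\<^sub>R T + (1 - a) *\<^sub>R U"
proof -
  obtain c where "c > 0" and c: "\<And>x. qform T x \<le> c * qform S x"
    using psd_dominated[OF Dens_psd[OF S] Dens_psd[OF T] null] by blast
  define a where "a = 1 / (c + 1)"
  have a: "0 < a" "a < 1"
    using \<open>c > 0\<close> by (auto simp: a_def)
  define U where "U = (1 / (1 - a)) *\<^sub>R (S - a *\<^sub>R T)"
  have "psd (S - a *\<^sub>R T)"
  proof -
    have "a * qform T x \<le> qform S x" for x
    proof -
      have "a * qform T x \<le> a * (c * qform S x)"
        using c[of x] a by (simp add: mult_left_mono)
      also have "\<dots> \<le> qform S x"
        using Dens_psd[OF S] \<open>c > 0\<close> by (simp add: a_def psd_iff_qform field_simps)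
      finally show ?thesis .
    qed
    then show ?thesis
      using S T by (simp add: psd_iff_qform qform_diff qform_scaleR hermitian_diff
          hermitian_scaleR Dens_hermitian)
  qed
  then have "psd U"
    using a by (simp add: U_def psd_scaleR)
  moreover have "trace U = 1"
    using a S T by (simp add: U_def Dens_def trace_scaleR trace_sub field_simps flip: of_real_add)
  ultimately have "U \<in> Dens"
    by (simp add: Dens_def)
  moreover have "S = a *\<^sub>R T + (1 - a) *\<^sub>R U"
    using a by (simp add: U_def)
  ultimately show ?thesis
    using a that by blast
qed

section \<open>Extended linear functions\<close>

lemma ext_linear_zero: "ext_linear D \<Longrightarrow> D 0 = 0"
proof -
  assume "ext_linear D"
  then have "D ((0::real) *\<^sub>R 0) = ereal 0 * D 0"
    using hermitian_zero unfolding ext_linear_def by blast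
  then show ?thesis
    by (simp add: zero_ereal_def[symmetric])
qed

lemma ext_linear_scaleR: "ext_linear D \<Longrightarrow> hermitian v \<Longrightarrow> D (a *\<^sub>R v) = ereal a * D v"
  by (simp add: ext_linear_def)

lemma ext_linear_lincomb_finite:
  assumes D: "ext_linear D" and "hermitian x" "hermitian y" "D x = ereal p" "D y = ereal q"
  shows "D (a *\<^sub>R x + b *\<^sub>R y) = ereal (a * p + b * q)"
proof -
  have "D (a *\<^sub>R x) = ereal (a * p)" "D (b *\<^sub>R y) = ereal (b * q)"
    using assms by (simp_all add: ext_linear_scaleR)
  then show ?thesis
    using D assms(2,3) by (auto simp: ext_linear_def hermitian_scaleR doubleton_eq_iff)
qed

lemma ext_linear_lincomb_minus_infinity:
  assumes D: "ext_linear D" and "hermitian x" "hermitian y"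
    and "D x = -\<infinity>" "D y \<noteq> \<infinity>" "0 < a" "0 \<le> b"
  shows "D (a *\<^sub>R x + b *\<^sub>R y) = -\<infinity>"
proof -
  have "D (a *\<^sub>R x) = -\<infinity>"
    using assms by (simp add: ext_linear_scaleR)
  moreover have "D (b *\<^sub>R y) \<noteq> \<infinity>"
    using assms by (cases "D y") (auto simp: ext_linear_scaleR ereal_mult_infty)
  ultimately show ?thesis
    using D assms(2,3) by (auto simp: ext_linear_def hermitian_scaleR doubleton_eq_iff)
qed

lemma additive_on_subspace_inner_representation:
  fixes f :: "'a::euclidean_space \<Rightarrow> real"
  assumes L: "subspace L"
    and add: "\<And>x y. x \<in> L \<Longrightarrow> y \<in> L \<Longrightarrow> f (x + y) = f x + f y"
    and scale: "\<And>c x. x \<in> L \<Longrightarrow> f (c *\<^sub>R x) = c * f x"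
  obtains w where "\<And>x. x \<in> L \<Longrightarrow> f x = inner w x"
proof -
  obtain B where B: "B \<subseteq> L" "independent B" "L \<subseteq> span B"
    using basis_exists by metis
  obtain g where "linear g" and g: "\<And>x. x \<in> B \<Longrightarrow> g x = f x"
    using linear_independent_extend[OF \<open>independent B\<close>] by metis
  have "f 0 = 0"
    using scale[of 0 0] subspace_0[OF L] by simp
  then have "subspace {x\<in>L. g x = f x}"
    using L add scale linear_0[OF \<open>linear g\<close>] linear_add[OF \<open>linear g\<close>]
      linear_scale[OF \<open>linear g\<close>]
    by (auto simp: subspace_def)
  then have "span B \<subseteq> {x\<in>L. g x = f x}"
    using B g by (intro span_minimal) auto
  then have "f x = g x" if "x \<in> L" for x
    using subsetD[OF B(3) that] by auto
  moreover have "g x = inner (adjoint g 1) x" for x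
    using adjoint_works[OF \<open>linear g\<close>, of x 1] by (simp add: inner_commute)
  ultimately show ?thesis
    by (intro that[of "adjoint g 1"]) simp
qed

lemma ext_linear_finite_part:
  assumes D: "ext_linear D"
  obtains H where "hermitian H"
    and "\<And>v. hermitian v \<Longrightarrow> \<bar>D v\<bar> \<noteq> \<infinity> \<Longrightarrow> D v = ereal (hs_inner H v)"
proof -
  define L where "L = {v. hermitian v \<and> \<bar>D v\<bar> \<noteq> \<infinity>}"
  define f where "f v = real_of_ereal (D v)" for v
  have fin: "D v = ereal (f v)" if "v \<in> L" for v
    using that by (auto simp: L_def f_def ereal_real)
  have add: "D (x + y) = ereal (f x + f y)" if "x \<in> L" "y \<in> L" for x y
    using ext_linear_lincomb_finite[OF D _ _ fin[OF that(1)] fin[OF that(2)], of 1 1] that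
    by (simp add: L_def)
  have scale: "D (c *\<^sub>R x) = ereal (c * f x)" if "x \<in> L" for c x
    using ext_linear_scaleR[OF D, of x c] fin[OF that] that by (simp add: L_def)
  have "subspace L"
    using add scale ext_linear_zero[OF D] hermitian_zero
    by (auto simp: subspace_def L_def hermitian_add hermitian_scaleR)
  moreover have "f (x + y) = f x + f y" if "x \<in> L" "y \<in> L" for x y
    using add[OF that] by (simp add: f_def)
  moreover have "f (c *\<^sub>R x) = c * f x" if "x \<in> L" for c x
    using scale[OF that] by (simp add: f_def)
  ultimately obtain W where W: "\<And>v. v \<in> L \<Longrightarrow> f v = inner W v"
    using additive_on_subspace_inner_representation[of L f] by blast
  define H where "H = (1/2::real) *\<^sub>R (W + adj W)"
  have "hermitian H"
    by (simp add: H_def hermitian_def adj_scaleR adj_add adj_adj add.commute)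
  moreover have "D v = ereal (hs_inner H v)" if "hermitian v" "\<bar>D v\<bar> \<noteq> \<infinity>" for v
  proof -
    have "v \<in> L"
      using that by (simp add: L_def)
    have "hs_inner H v = hs_inner W v"
      using hs_inner_adj_hermitian[OF \<open>hermitian v\<close>, of W]
      by (simp add: H_def hs_inner_eq_inner inner_add_left)
    also have "\<dots> = f v"
      using W[OF \<open>v \<in> L\<close>] by (simp add: hs_inner_eq_inner)
    finally show ?thesis
      using fin[OF \<open>v \<in> L\<close>] by simp
  qed
  ultimately show ?thesis
    using that by blast
qed

section \<open>Extended affine functions as expected scores\<close>

lemma ext_linear_face_null_space:
  assumes r: "r \<in> Dens" and D: "ext_linear D" and no_pinf: "\<forall>t\<in>Dens. D (t - r) \<noteq> \<infinity>"
  obtains S where "S \<in> Dens" "\<And>T. T \<in> Dens \<Longrightarrow> D (T - r) \<noteq> -\<infinity> \<longleftrightarrow> null_space S \<subseteq> null_space T"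
proof -
  define C where "C = {T\<in>Dens. D (T - r) \<noteq> -\<infinity>}"
  have "r \<in> C"
    using r ext_linear_zero[OF D] by (simp add: C_def)
  then obtain S where "S \<in> C" and min: "\<And>T. T \<in> C \<Longrightarrow> dim (null_space S) \<le> dim (null_space T)"
    using ex_has_least_nat[of "\<lambda>T. T \<in> C" r "\<lambda>T. dim (null_space T)"] by blast
  then have S: "S \<in> Dens" "D (S - r) \<noteq> -\<infinity>"
    by (simp_all add: C_def)
  have herm: "hermitian (T - r)" if "T \<in> Dens" for T
    using that r by (simp add: hermitian_diff Dens_hermitian)
  have comb: "a *\<^sub>R T + (1 - a) *\<^sub>R U - r = a *\<^sub>R (T - r) + (1 - a) *\<^sub>R (U - r)" for a T U
    by (simp add: algebra_simps)
  \<comment> \<open>The midpoint M of S and T stays on the face, and its null space lies in those of S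
    and T; minimality of S forces it to be that of S.\<close>
  have "null_space S \<subseteq> null_space T" if T: "T \<in> Dens" "D (T - r) \<noteq> -\<infinity>" for T
  proof -
    define M where "M = (1/2::real) *\<^sub>R S + (1 - 1/2) *\<^sub>R T"
    have "M \<in> Dens"
      unfolding M_def using S T by (intro Dens_convex_comb) auto
    moreover have "D (M - r) \<noteq> -\<infinity>"
    proof -
      obtain p where p: "D (S - r) = ereal p"
        using S no_pinf by (cases "D (S - r)") auto
      obtain q where q: "D (T - r) = ereal q"
        using T no_pinf by (cases "D (T - r)") auto
      have "D (M - r) = ereal (1/2 * p + (1 - 1/2) * q)"
        unfolding M_def comb using S T by (intro ext_linear_lincomb_finite[OF D herm herm p q])
      then show ?thesis
        by simp
    qed
    ultimately have "dim (null_space S) \<le> dim (null_space M)"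
      by (intro min) (simp add: C_def)
    moreover have "null_space M \<subseteq> null_space S \<inter> null_space T"
      unfolding M_def using S T by (intro psd_null_space_convex_comb Dens_psd) auto
    ultimately have "null_space M = null_space S"
      by (intro subspace_dim_equal subspace_null_space) auto
    with \<open>null_space M \<subseteq> _\<close> show ?thesis
      by blast
  qed
  moreover have "D (T - r) \<noteq> -\<infinity>" if T: "T \<in> Dens" "null_space S \<subseteq> null_space T" for T
  proof
    assume "D (T - r) = -\<infinity>"
    obtain a U where "0 < a" "a < 1" "U \<in> Dens" "S = a *\<^sub>R T + (1 - a) *\<^sub>R U"
      using Dens_decompose_dominated[OF S(1) T] by blast
    with \<open>D (T - r) = -\<infinity>\<close> have "D (S - r) = -\<infinity>"
      using ext_linear_lincomb_minus_infinity[OF D herm herm] T no_pinf by (simp add: comb)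
    with S show False
      by simp
  qed
  ultimately show ?thesis
    using S that by blast
qed

lemma psd_splitting_of_identity:
  assumes "psd P" "hermitian H"
  obtains N where "N > 0"
    and "psd ((1 / (2 * N)) *\<^sub>R P)"
    and "psd ((1 / (4 * N)) *\<^sub>R (H + N *\<^sub>R mat 1))"
    and "psd (mat 1 - (1 / (2 * N)) *\<^sub>R P - (1 / (4 * N)) *\<^sub>R (H + N *\<^sub>R mat 1))"
proof -
  obtain KP where "KP > 0" and KP: "\<And>x. \<bar>qform P x\<bar> \<le> KP * (norm x)\<^sup>2"
    using qform_bounded by blast
  obtain KH where "KH > 0" and KH: "\<And>x. \<bar>qform H x\<bar> \<le> KH * (norm x)\<^sup>2"
    using qform_bounded by blast
  define N where "N = KP + KH"
  have "N > 0"
    using \<open>KP > 0\<close> \<open>KH > 0\<close> by (simp add: N_def)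
  have KP_KH: "0 \<le> KP * (norm x)\<^sup>2" "0 \<le> KH * (norm x)\<^sup>2" for x
    using \<open>KP > 0\<close> \<open>KH > 0\<close> by simp_all
  have P_le: "qform P x \<le> N * (norm x)\<^sup>2" for x
    unfolding N_def distrib_right using abs_le_D1[OF KP[of x]] KP_KH[of x] by linarith
  have H_le: "\<bar>qform H x\<bar> \<le> N * (norm x)\<^sup>2" for x
    unfolding N_def distrib_right using KH[of x] KP_KH[of x] by linarith
  have herm: "hermitian (H + N *\<^sub>R mat 1)"
    using assms by (simp add: hermitian_add hermitian_scaleR hermitian_mat_one)
  have "psd ((1 / (2 * N)) *\<^sub>R P)"
    using assms \<open>N > 0\<close> by (simp add: psd_scaleR)
  moreover have "psd ((1 / (4 * N)) *\<^sub>R (H + N *\<^sub>R mat 1))"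
  proof (rule psd_scaleR)
    have "0 \<le> qform H x + N * (norm x)\<^sup>2" for x
      using abs_le_D2[OF H_le[of x]] by linarith
    then show "psd (H + N *\<^sub>R mat 1)"
      using herm by (simp add: psd_iff_qform qform_add qform_scaleR qform_mat_one)
  qed (use \<open>N > 0\<close> in simp)
  moreover have "psd (mat 1 - (1 / (2 * N)) *\<^sub>R P - (1 / (4 * N)) *\<^sub>R (H + N *\<^sub>R mat 1))"
  proof -
    have "(qform H x + N * (norm x)\<^sup>2) / (4 * N) \<le> (norm x)\<^sup>2 - qform P x / (2 * N)" for x
    proof -
      have "qform P x / (2 * N) \<le> N * (norm x)\<^sup>2 / (2 * N)"
        using P_le[of x] \<open>N > 0\<close> by (intro divide_right_mono) auto
      also have "\<dots> = (norm x)\<^sup>2 / 2"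
        using \<open>N > 0\<close> by simp
      moreover have "(qform H x + N * (norm x)\<^sup>2) / (4 * N) \<le> 2 * N * (norm x)\<^sup>2 / (4 * N)"
        using abs_le_D1[OF H_le[of x]] \<open>N > 0\<close> by (intro divide_right_mono) auto
      moreover have "2 * N * (norm x)\<^sup>2 / (4 * N) = (norm x)\<^sup>2 / 2"
        using \<open>N > 0\<close> by simp
      ultimately show ?thesis
        by linarith
    qed
    moreover have "hermitian P"
      using assms by (simp add: psd_iff_qform)
    ultimately show ?thesis
      using herm by (simp add: psd_iff_qform qform_diff qform_add qform_scaleR qform_mat_one
          hermitian_diff hermitian_scaleR hermitian_mat_one)
  qed
  ultimately show ?thesis
    using \<open>N > 0\<close> that by blast
qed

lemma ext_affine_function_is_expected_score:
  assumes r: "r \<in> Dens" and D: "ext_linear D" and no_pinf: "\<forall>t\<in>Dens. D (t - r) \<noteq> \<infinity>"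
  shows "\<exists>M s. is_measurement M \<and>
    (\<forall>t\<in>Dens. (\<Sum>y\<in>fst M. ereal (hs_inner (snd M y) t) * s y) = ereal c + D (t - r))"
proof -
  obtain S where S: "\<And>T. T \<in> Dens \<Longrightarrow> D (T - r) \<noteq> -\<infinity> \<longleftrightarrow> null_space S \<subseteq> null_space T"
    using ext_linear_face_null_space[OF r D no_pinf] by blast
  obtain P where "psd P" and P_nonneg: "\<And>T. psd T \<Longrightarrow> 0 \<le> hs_inner P T"
    and P_zero: "\<And>T. psd T \<Longrightarrow> hs_inner P T = 0 \<longleftrightarrow> null_space S \<subseteq> null_space T"
    using psd_detecting_null_space by blast
  obtain H where "hermitian H"
    and H: "\<And>v. hermitian v \<Longrightarrow> \<bar>D v\<bar> \<noteq> \<infinity> \<Longrightarrow> D v = ereal (hs_inner H v)"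
    using ext_linear_finite_part[OF D] by blast
  obtain N where "N > 0" and psd_E:
      "psd ((1 / (2 * N)) *\<^sub>R P)" "psd ((1 / (4 * N)) *\<^sub>R (H + N *\<^sub>R mat 1))"
      "psd (mat 1 - (1 / (2 * N)) *\<^sub>R P - (1 / (4 * N)) *\<^sub>R (H + N *\<^sub>R mat 1))"
    using psd_splitting_of_identity[OF \<open>psd P\<close> \<open>hermitian H\<close>] by blast
  define E where "E y = (if y = 0 then (1 / (2 * N)) *\<^sub>R P
    else if y = 1 then mat 1 - (1 / (2 * N)) *\<^sub>R P - (1 / (4 * N)) *\<^sub>R (H + N *\<^sub>R mat 1)
    else (1 / (4 * N)) *\<^sub>R (H + N *\<^sub>R mat 1))" for y :: nat
  define c' where "c' = c - hs_inner H r"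
  define s where "s y = (if y = 0 then -\<infinity> else if y = 1 then ereal (c' - N) else ereal (c' + 3 * N))"
    for y :: nat
  \<comment> \<open>Where \<langle>P, t\<rangle> = 0, with k = \<langle>E 2, t\<rangle> = (\<langle>H, t\<rangle> + N) / (4 N) the expected score is
    (1 - k) (c' - N) + k (c' + 3 N) = c' + \<langle>H, t\<rangle>; elsewhere outcome 0 contributes -\<infinity>.\<close>
  have meas: "is_measurement ({0, 1, 2}, E)"
    using psd_E by (simp add: is_measurement_def E_def)
  have expected: "(\<Sum>y\<in>{0, 1, 2}. ereal (hs_inner (E y) t) * s y) = ereal c + D (t - r)"
    if t: "t \<in> Dens" for t
  proof -
    have "hs_inner (mat 1) t = 1"
      using t by (simp add: hs_inner_def adj_mat_one Dens_def)
    then have sum: "(\<Sum>y\<in>{0, 1, 2}. ereal (hs_inner (E y) t) * s y)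
        = ereal (hs_inner P t / (2 * N)) * -\<infinity> + ereal (c' + hs_inner H t - hs_inner P t * (c' - N) / (2 * N))"
      using \<open>N > 0\<close> by (simp add: E_def s_def hs_inner_eq_inner inner_diff_left inner_add_left
          field_simps)
    show ?thesis
    proof (cases "D (t - r) = -\<infinity>")
      case True
      then have "0 < hs_inner P t"
        using P_nonneg[of t] P_zero[of t] S[OF t] Dens_psd[OF t] by fastforce
      with \<open>N > 0\<close> True show ?thesis
        unfolding sum by simp
    next
      case False
      then have "hs_inner P t = 0"
        using P_zero[of t] S[OF t] Dens_psd[OF t] by blast
      moreover have "\<bar>D (t - r)\<bar> \<noteq> \<infinity>"
        using False no_pinf t by (cases "D (t - r)") auto
      then have "D (t - r) = ereal (hs_inner H t - hs_inner H r)"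
        using H[of "t - r"] t r
        by (simp add: hermitian_diff Dens_hermitian hs_inner_eq_inner inner_diff_right)
      ultimately show ?thesis
        unfolding sum by (simp add: c'_def)
    qed
  qed
  show ?thesis
    using meas expected by (intro exI[of _ "({0, 1, 2}, E)"] exI[of _ s]) simp
qed

theorem corollary3p6:
  fixes F :: "'n::finite cmat \<Rightarrow> real"
    and d :: "'n cmat \<Rightarrow> 'n cmat \<Rightarrow> ereal"
  assumes "convex_on Dens F"
    and "selection_ext_subgradients F d"
  shows "\<exists>(s :: 'n cmat \<Rightarrow> nat \<Rightarrow> ereal) (\<mu> :: 'n cmat \<Rightarrow> 'n meas).
           is_quantum_score s \<mu> \<and> truthful s \<mu> \<and>
           (\<forall>\<rho>\<in>Dens. \<forall>\<rho>'\<in>Dens. expected_score s \<mu> \<rho>' \<rho> = ereal (F \<rho>') + d \<rho>' (\<rho> - \<rho>'))"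
proof -
  have subgrad: "ext_linear (d r)" "\<And>t. t \<in> Dens \<Longrightarrow> ereal (F r) + d r (t - r) \<le> ereal (F t)"
    and no_pinf: "\<forall>t\<in>Dens. d r (t - r) \<noteq> \<infinity>" if "r \<in> Dens" for r
    using assms(2) that by (auto simp: selection_ext_subgradients_def ext_subdiff_def)
  have "\<forall>r\<in>Dens. \<exists>M s. is_measurement M \<and>
      (\<forall>t\<in>Dens. (\<Sum>y\<in>fst M. ereal (hs_inner (snd M y) t) * s y) = ereal (F r) + d r (t - r))"
    using ext_affine_function_is_expected_score[OF _ subgrad(1) no_pinf] by blast
  from bchoice[OF this] obtain \<mu> where "\<forall>r\<in>Dens. \<exists>s. is_measurement (\<mu> r) \<and>
      (\<forall>t\<in>Dens. (\<Sum>y\<in>fst (\<mu> r). ereal (hs_inner (snd (\<mu> r) y) t) * s y) = ereal (F r) + d r (t - r))"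
    by blast
  from bchoice[OF this] obtain s where "\<forall>r\<in>Dens. is_measurement (\<mu> r) \<and>
      (\<forall>t\<in>Dens. expected_score s \<mu> r t = ereal (F r) + d r (t - r))"
    unfolding expected_score_def by blast
  moreover from this have "truthful s \<mu>"
    using subgrad ext_linear_zero[OF subgrad(1)] by (simp add: truthful_def)
  ultimately show ?thesis
    by (auto simp: is_quantum_score_def)
qed

end
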